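(* Let $G$ be a sub-$2$-permutable graph and let $H$ be a $2$-adjustable graph. Then $\chi_i(G\,\square\,H)\le \Delta(G\,\square\,H)+2$.
   Context: All graphs are finite and simple. $K^-_{2n}$ is the complete graph on $2n$ vertices with a perfect matching removed. A homomorphism $f:G\to H$ is a map $V(G)\to V(H)$ with $f(u)f(v)\in E(H)$ whenever $uv\in E(G)$; it is locally injective if for every vertex $v$, $f$ is injective on $N(v)$. A graph $G$ is sub-$2$-permutable if it admits a locally injective homomorphism to $K^-_{\Delta(G)+2}$. An incidence of $G$ is a pair $(v,e)$ with $v\in e\in E(G)$; incidences $(v,e),(u,f)$ are adjacent if $v=u$, or $e=f$, or $vu\in\{e,f\}$; an incidence coloring gives adjacent incidences distinct colors; $\chi_i(G)$ is the least number of colors of an incidence coloring. $S^0_c(v)=\{c(v,uv):uv\in E(G)\}$. An incidence coloring $c$ with palette $P$ is adjustable if there are two distinct colors $x,y\in P$ such that no vertex $v$ has $\{x,y\}\subseteq S^0_c(v)$; $H$ is $2$-adjustable if it admits an adjustable incidence coloring with a palette of size $\Delta(H)+2$. $\Delta$ denotes maximum degree. $G\,\square\,H$ is the Cartesian product: vertex set $V(G)\times V(H)$, $(u,v)\sim(u',v')$ iff ($uu'\in E(G)$, $v=v'$) or ($u=u'$, $vv'\in E(H)$). *)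

theory Defs
  imports Main
begin

definition graph :: "'a set \<Rightarrow> 'a set set \<Rightarrow> bool" where
  "graph V E \<longleftrightarrow> finite V \<and> (\<forall>e\<in>E. e \<subseteq> V \<and> card e = 2)"

definition nbhd :: "'a set set \<Rightarrow> 'a \<Rightarrow> 'a set" where
  "nbhd E v = {u. {u, v} \<in> E}"

definition degree :: "'a set set \<Rightarrow> 'a \<Rightarrow> nat" where
  "degree E v = card (nbhd E v)"

definition maxdeg :: "'a set \<Rightarrow> 'a set set \<Rightarrow> nat" where
  "maxdeg V E = Max (insert 0 (degree E ` V))"

text \<open>K^-_m: complete graph on {0..<m} minus the perfect matching {2k,2k+1} (meaningful for even m).\<close>
definition Kminus_V :: "nat \<Rightarrow> nat set" where
  "Kminus_V m = {0..<m}"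

definition Kminus_E :: "nat \<Rightarrow> nat set set" where
  "Kminus_E m = {{i, j} | i j. i < m \<and> j < m \<and> i \<noteq> j \<and> i div 2 \<noteq> j div 2}"

definition graph_hom :: "'a set \<Rightarrow> 'a set set \<Rightarrow> 'b set \<Rightarrow> 'b set set \<Rightarrow> ('a \<Rightarrow> 'b) \<Rightarrow> bool" where
  "graph_hom V E W F f \<longleftrightarrow> (\<forall>v\<in>V. f v \<in> W) \<and> (\<forall>u v. {u, v} \<in> E \<longrightarrow> {f u, f v} \<in> F)"

definition locally_injective :: "'a set \<Rightarrow> 'a set set \<Rightarrow> ('a \<Rightarrow> 'b) \<Rightarrow> bool" where
  "locally_injective V E f \<longleftrightarrow> (\<forall>v\<in>V. inj_on f (nbhd E v))"

definition sub_2_permutable :: "'a set \<Rightarrow> 'a set set \<Rightarrow> bool" where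
  "sub_2_permutable V E \<longleftrightarrow> graph V E \<and> even (maxdeg V E + 2) \<and>
     (\<exists>f. graph_hom V E (Kminus_V (maxdeg V E + 2)) (Kminus_E (maxdeg V E + 2)) f
          \<and> locally_injective V E f)"

definition incidences :: "'a set set \<Rightarrow> ('a \<times> 'a set) set" where
  "incidences E = {(v, e). e \<in> E \<and> v \<in> e}"

definition inc_adj :: "'a \<times> 'a set \<Rightarrow> 'a \<times> 'a set \<Rightarrow> bool" where
  "inc_adj a b \<longleftrightarrow> (case a of (v, e) \<Rightarrow> case b of (u, f) \<Rightarrow>
      (v, e) \<noteq> (u, f) \<and> (v = u \<or> e = f \<or> {v, u} = e \<or> {v, u} = f))"

definition incidence_coloring :: "'a set set \<Rightarrow> ('a \<times> 'a set \<Rightarrow> 'c) \<Rightarrow> bool" where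
  "incidence_coloring E c \<longleftrightarrow>
     (\<forall>a\<in>incidences E. \<forall>b\<in>incidences E. inc_adj a b \<longrightarrow> c a \<noteq> c b)"

definition chi_i :: "'a set set \<Rightarrow> nat" where
  "chi_i E = (LEAST k. \<exists>c :: 'a \<times> 'a set \<Rightarrow> nat.
       incidence_coloring E c \<and> c ` incidences E \<subseteq> {0..<k})"

definition S0 :: "'a set set \<Rightarrow> ('a \<times> 'a set \<Rightarrow> 'c) \<Rightarrow> 'a \<Rightarrow> 'c set" where
  "S0 E c v = {c (v, {u, v}) | u. {u, v} \<in> E}"

definition adjustable :: "'a set \<Rightarrow> 'a set set \<Rightarrow> ('a \<times> 'a set \<Rightarrow> 'c) \<Rightarrow> 'c set \<Rightarrow> bool" where
  "adjustable V E c P \<longleftrightarrow> incidence_coloring E c \<and> c ` incidences E \<subseteq> P \<and>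
     (\<exists>x\<in>P. \<exists>y\<in>P. x \<noteq> y \<and> (\<forall>v\<in>V. \<not> {x, y} \<subseteq> S0 E c v))"

definition two_adjustable :: "'a set \<Rightarrow> 'a set set \<Rightarrow> bool" where
  "two_adjustable V E \<longleftrightarrow> graph V E \<and>
     (\<exists>(c :: 'a \<times> 'a set \<Rightarrow> nat) P. finite P \<and> card P = maxdeg V E + 2 \<and> adjustable V E c P)"

definition cart_V :: "'a set \<Rightarrow> 'b set \<Rightarrow> ('a \<times> 'b) set" where
  "cart_V V W = V \<times> W"

definition cart_E :: "'a set \<Rightarrow> 'a set set \<Rightarrow> 'b set \<Rightarrow> 'b set set \<Rightarrow> ('a \<times> 'b) set set" where
  "cart_E V E W F =
     {{(u, w), (u', w)} | u u' w. {u, u'} \<in> E \<and> w \<in> W} \<union>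
     {{(u, w), (u, w')} | u w w'. u \<in> V \<and> {w, w'} \<in> F}"

end

theory Submission
  imports Defs
begin

text \<open>Colour G x H layer by layer. Let f be a locally injective homomorphism of G into K^-_m
  and c an incidence colouring of H with palette P and two colours x, y never seen together at a
  vertex. The incidence of (u,w) towards (a,w) gets f a, replaced by its matching partner when x is
  seen at w; the incidence of (u,w) towards (u,b) whose H-colour is x, y or another p gets f u, the
  partner of f u, or a fresh colour m + \<rho> p. As f maps edges to non-matching pairs of K^-_m, the
  G-colours at (u,w) avoid the matching pair of f u, which is thus free for x and y. The twist on
  layers seeing x separates an x-coloured H-incidence at (a,w) from the G-incidence pointing at
  (a,w); a layer seeing y does not see x. With m = \<Delta>(G) + 2 and |P| = \<Delta>(H) + 2 this uses
  \<Delta>(G) + \<Delta>(H) + 2 colours.\<close>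

subsection \<open>Incidence colourings from arc colourings\<close>

definition other_end :: "'v \<Rightarrow> 'v set \<Rightarrow> 'v" where
  "other_end v e = (THE w. w \<in> e \<and> w \<noteq> v)"

lemma other_end:
  assumes "card e = 2" "v \<in> e"
  shows "other_end v e \<noteq> v" "e = {v, other_end v e}"
proof -
  obtain w where w: "e = {v, w}" "w \<noteq> v"
    using assms by (metis card_2_iff insert_commute insert_iff singletonD)
  have "other_end v e = w"
    unfolding other_end_def using w by (intro the_equality) auto
  with w show "other_end v e \<noteq> v" "e = {v, other_end v e}" by simp_all
qed

lemma incidence_coloring_of_arc_coloring:
  assumes E2: "\<forall>e\<in>E. card e = 2"
    and at_vertex: "\<And>v u u'. {v, u} \<in> E \<Longrightarrow> {v, u'} \<in> E \<Longrightarrow> u \<noteq> u' \<Longrightarrow> C v u \<noteq> C v u'"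
    and along_path: "\<And>v u t. {v, u} \<in> E \<Longrightarrow> {u, t} \<in> E \<Longrightarrow> C v u \<noteq> C u t"
  shows "incidence_coloring E (\<lambda>(v, e). C v (other_end v e))"
  unfolding incidence_coloring_def
proof (intro ballI impI)
  fix a b assume "a \<in> incidences E" "b \<in> incidences E" and adj: "inc_adj a b"
  then obtain v e u f where a: "a = (v, e)" "v \<in> e" "e \<in> E" and b: "b = (u, f)" "u \<in> f" "f \<in> E"
    unfolding incidences_def by auto
  define v' u' where "v' = other_end v e" and "u' = other_end u f"
  have v': "v' \<noteq> v" "e = {v, v'}" and u': "u' \<noteq> u" "f = {u, u'}"
    using other_end[of e v] other_end[of f u] E2 a b unfolding v'_def u'_def by auto
  have "(v, e) \<noteq> (u, f)" "v = u \<or> e = f \<or> {v, u} = e \<or> {v, u} = f"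
    using adj a b by (auto simp: inc_adj_def)
  then consider "v = u" "v' \<noteq> u'" | "u = v'" "u' = v" | "u = v'" | "v = u'"
    using v' u' by (auto simp: doubleton_eq_iff)
  then have "C v v' \<noteq> C u u'"
  proof cases
    case 1
    then show ?thesis using at_vertex[of v v' u'] v' u' a b by simp
  next
    case 2
    then show ?thesis using along_path[of v v' v] v' a by (simp add: insert_commute)
  next
    case 3
    then show ?thesis using along_path[of v v' u'] v' u' a b by simp
  next
    case 4
    then show ?thesis using along_path[of u v v'] v' u' a b by (simp add: insert_commute)
  qed
  then show "(case a of (v, e) \<Rightarrow> C v (other_end v e)) \<noteq> (case b of (v, e) \<Rightarrow> C v (other_end v e))"
    using a b unfolding v'_def u'_def by simp
qed

lemma chi_i_le_of_arc_coloring: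
  fixes C :: "'v \<Rightarrow> 'v \<Rightarrow> nat"
  assumes E2: "\<forall>e\<in>E. card e = 2"
    and "\<And>v u u'. {v, u} \<in> E \<Longrightarrow> {v, u'} \<in> E \<Longrightarrow> u \<noteq> u' \<Longrightarrow> C v u \<noteq> C v u'"
    and "\<And>v u t. {v, u} \<in> E \<Longrightarrow> {u, t} \<in> E \<Longrightarrow> C v u \<noteq> C u t"
    and less: "\<And>v u. {v, u} \<in> E \<Longrightarrow> C v u < k"
  shows "chi_i E \<le> k"
proof -
  let ?col = "\<lambda>(v, e). C v (other_end v e)"
  have "?col ` incidences E \<subseteq> {0..<k}"
  proof
    fix z assume "z \<in> ?col ` incidences E"
    then obtain v e where "e \<in> E" "v \<in> e" "z = C v (other_end v e)"
      unfolding incidences_def by auto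
    then show "z \<in> {0..<k}" using less other_end(2)[of e v] E2 by auto
  qed
  moreover have "incidence_coloring E ?col"
    by (rule incidence_coloring_of_arc_coloring[OF assms(1-3)])
  ultimately show ?thesis
    unfolding chi_i_def by (intro Least_le) blast
qed

lemma chi_i_empty: "chi_i {} = 0"
  unfolding chi_i_def incidences_def incidence_coloring_def by (intro Least_eq_0) simp

subsection \<open>Degrees in the Cartesian product\<close>

lemma graph_edgeD:
  assumes "graph V E" "{u, v} \<in> E"
  shows "u \<in> V" "v \<in> V" "u \<noteq> v"
  using assms unfolding graph_def by (auto simp: card_2_iff)

lemma cart_E_cases [consumes 1, case_names G_edge H_edge]:
  assumes "e \<in> cart_E VG EG VH EH"
  obtains x x' z where "e = {(x, z), (x', z)}" "{x, x'} \<in> EG" "z \<in> VH"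
    | x z z' where "e = {(x, z), (x, z')}" "x \<in> VG" "{z, z'} \<in> EH"
  using assms unfolding cart_E_def by (elim UnE CollectE exE conjE) blast+

lemma cart_E_doubleton_iff:
  "{(u, w), (a, b)} \<in> cart_E VG EG VH EH \<longleftrightarrow>
    (b = w \<and> {u, a} \<in> EG \<and> w \<in> VH) \<or> (a = u \<and> u \<in> VG \<and> {w, b} \<in> EH)"
proof
  assume "{(u, w), (a, b)} \<in> cart_E VG EG VH EH"
  then show "(b = w \<and> {u, a} \<in> EG \<and> w \<in> VH) \<or> (a = u \<and> u \<in> VG \<and> {w, b} \<in> EH)"
  proof (cases rule: cart_E_cases)
    case (G_edge x x' z)
    then have "b = w" "w = z" "{u, a} = {x, x'}" by (auto simp: doubleton_eq_iff)
    with G_edge show ?thesis by simp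
  next
    case (H_edge x z z')
    then have "a = u" "u = x" "{w, b} = {z, z'}" by (auto simp: doubleton_eq_iff)
    with H_edge show ?thesis by simp
  qed
next
  assume "(b = w \<and> {u, a} \<in> EG \<and> w \<in> VH) \<or> (a = u \<and> u \<in> VG \<and> {w, b} \<in> EH)"
  then show "{(u, w), (a, b)} \<in> cart_E VG EG VH EH"
    unfolding cart_E_def by blast
qed

lemma graph_cart:
  assumes "graph VG EG" "graph VH EH"
  shows "graph (cart_V VG VH) (cart_E VG EG VH EH)"
proof -
  have "e \<subseteq> cart_V VG VH \<and> card e = 2" if "e \<in> cart_E VG EG VH EH" for e
    using that
  proof (cases rule: cart_E_cases)
    case (G_edge x x' z)
    then show ?thesis using graph_edgeD[OF assms(1) G_edge(2)] by (simp add: cart_V_def)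
  next
    case (H_edge x z z')
    then show ?thesis using graph_edgeD[OF assms(2) H_edge(3)] by (simp add: cart_V_def)
  qed
  then show ?thesis
    using assms unfolding graph_def cart_V_def by simp
qed

lemma cart_E_empty:
  assumes "graph VG EG" "graph VH EH" "VG = {} \<or> VH = {}"
  shows "cart_E VG EG VH EH = {}"
proof -
  have False if "e \<in> cart_E VG EG VH EH" for e
    using that
  proof (cases rule: cart_E_cases)
    case (G_edge x x' z)
    then show False using graph_edgeD(1)[OF assms(1) G_edge(2)] assms(3) by blast
  next
    case (H_edge x z z')
    then show False using graph_edgeD(1)[OF assms(2) H_edge(3)] assms(3) by blast
  qed
  then show ?thesis by blast
qed

lemma finite_nbhd:
  assumes "graph V E" shows "finite (nbhd E v)"
proof -
  have "nbhd E v \<subseteq> V" using graph_edgeD(1)[OF assms] unfolding nbhd_def by blast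
  then show ?thesis using assms unfolding graph_def by (blast intro: finite_subset)
qed

lemma degree_le_maxdeg: "finite V \<Longrightarrow> u \<in> V \<Longrightarrow> degree E u \<le> maxdeg V E"
  unfolding maxdeg_def by (intro Max_ge) auto

lemma maxdeg_attained:
  assumes "finite V" "V \<noteq> {}"
  obtains u where "u \<in> V" "degree E u = maxdeg V E"
proof -
  have "maxdeg V E \<in> insert 0 (degree E ` V)"
    unfolding maxdeg_def using assms(1) by (intro Max_in) auto
  moreover obtain u0 where "u0 \<in> V" using assms(2) by blast
  ultimately show ?thesis
    using that degree_le_maxdeg[OF assms(1)] by (metis image_iff insert_iff le_zero_eq)
qed

lemma nbhd_cart:
  assumes "u \<in> VG" "w \<in> VH"
  shows "nbhd (cart_E VG EG VH EH) (u, w) = (\<lambda>a. (a, w)) ` nbhd EG u \<union> (\<lambda>b. (u, b)) ` nbhd EH w"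
proof (intro set_eqI)
  fix p :: "'a \<times> 'b"
  obtain a b where p: "p = (a, b)" by fastforce
  have "p \<in> nbhd (cart_E VG EG VH EH) (u, w) \<longleftrightarrow> {(u, w), (a, b)} \<in> cart_E VG EG VH EH"
    unfolding nbhd_def p by (simp add: insert_commute)
  also have "\<dots> \<longleftrightarrow> (b = w \<and> {a, u} \<in> EG) \<or> (a = u \<and> {b, w} \<in> EH)"
    using assms by (auto simp: cart_E_doubleton_iff insert_commute)
  also have "\<dots> \<longleftrightarrow> p \<in> (\<lambda>a. (a, w)) ` nbhd EG u \<union> (\<lambda>b. (u, b)) ` nbhd EH w"
    unfolding nbhd_def p by auto
  finally show "p \<in> nbhd (cart_E VG EG VH EH) (u, w) \<longleftrightarrow>
      p \<in> (\<lambda>a. (a, w)) ` nbhd EG u \<union> (\<lambda>b. (u, b)) ` nbhd EH w" .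
qed

lemma degree_cart:
  assumes gG: "graph VG EG" and gH: "graph VH EH" and "u \<in> VG" "w \<in> VH"
  shows "degree (cart_E VG EG VH EH) (u, w) = degree EG u + degree EH w"
proof -
  have "(\<lambda>a. (a, w)) ` nbhd EG u \<inter> (\<lambda>b. (u, b)) ` nbhd EH w = {}"
    using graph_edgeD(3)[OF gG] unfolding nbhd_def by auto
  then show ?thesis
    unfolding degree_def nbhd_cart[OF assms(3,4)]
    using finite_nbhd[OF gG] finite_nbhd[OF gH]
    by (simp add: card_Un_disjoint card_image inj_on_def)
qed

lemma maxdeg_cart_ge:
  assumes gG: "graph VG EG" and gH: "graph VH EH" and "VG \<noteq> {}" "VH \<noteq> {}"
  shows "maxdeg VG EG + maxdeg VH EH \<le> maxdeg (cart_V VG VH) (cart_E VG EG VH EH)"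
proof -
  obtain u where u: "u \<in> VG" "degree EG u = maxdeg VG EG"
    using maxdeg_attained gG assms(3) unfolding graph_def by metis
  obtain w where w: "w \<in> VH" "degree EH w = maxdeg VH EH"
    using maxdeg_attained gH assms(4) unfolding graph_def by metis
  have "finite (cart_V VG VH)" "(u, w) \<in> cart_V VG VH"
    using graph_cart[OF gG gH] u w unfolding graph_def cart_V_def by auto
  then show ?thesis
    using degree_le_maxdeg degree_cart[OF gG gH u(1) w(1)] u w by metis
qed

subsection \<open>The colouring of the product\<close>

text \<open>The partner of a colour in the perfect matching removed from K^-_m.\<close>
definition mate :: "nat \<Rightarrow> nat" where
  "mate k = (if even k then k + 1 else k - 1)"

lemma mate_div_2 [simp]: "mate k div 2 = k div 2"
  unfolding mate_def by (cases "even k") (auto elim!: evenE oddE)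

lemma mate_mate [simp]: "mate (mate k) = k"
  unfolding mate_def by (cases "even k") (auto elim!: evenE oddE)

lemma mate_neq: "mate k \<noteq> k"
  unfolding mate_def by (cases "even k") (auto elim!: evenE oddE)

lemma mate_less: "even m \<Longrightarrow> k < m \<Longrightarrow> mate k < m"
  unfolding mate_def by (cases "even k") (auto elim!: evenE oddE)

lemma mate_eq_iff [simp]: "mate j = mate k \<longleftrightarrow> j = k"
  by (metis mate_mate)

locale cart_coloring =
  fixes VG :: "'a set" and EG :: "'a set set" and VH :: "'b set" and EH :: "'b set set"
    and m :: nat and f :: "'a \<Rightarrow> nat"
    and c :: "'b \<times> 'b set \<Rightarrow> 'c" and P :: "'c set" and x y :: 'c
    and n :: nat and \<rho> :: "'c \<Rightarrow> nat"
  assumes graph_G: "graph VG EG" and graph_H: "graph VH EH"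
    and even_m: "even m"
    and hom: "graph_hom VG EG (Kminus_V m) (Kminus_E m) f"
    and loc_inj: "locally_injective VG EG f"
    and coloring_H: "incidence_coloring EH c"
    and palette: "c ` incidences EH \<subseteq> P"
    and x_y_apart: "\<forall>v\<in>VH. \<not> {x, y} \<subseteq> S0 EH c v"
    and inj_\<rho>: "inj_on \<rho> (P - {x, y})"
    and \<rho>_less: "\<rho> ` (P - {x, y}) \<subseteq> {..<n}"
begin

abbreviation "E \<equiv> cart_E VG EG VH EH"

lemma f_less: "u \<in> VG \<Longrightarrow> f u < m"
  using hom unfolding graph_hom_def Kminus_V_def by auto

lemma f_edge:
  assumes "{u, a} \<in> EG"
  shows "f u div 2 \<noteq> f a div 2"
proof -
  have "{f u, f a} \<in> Kminus_E m"
    using hom assms unfolding graph_hom_def by blast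
  then obtain i j where "{f u, f a} = {i, j}" "i div 2 \<noteq> j div 2"
    unfolding Kminus_E_def by blast
  then show ?thesis by (auto simp: doubleton_eq_iff)
qed

lemma f_inj_at_vertex:
  assumes "{u, a} \<in> EG" "{u, a'} \<in> EG" "a \<noteq> a'"
  shows "f a \<noteq> f a'"
proof -
  have "inj_on f (nbhd EG u)"
    using loc_inj graph_edgeD(1)[OF graph_G assms(1)] unfolding locally_injective_def by blast
  moreover have "a \<in> nbhd EG u" "a' \<in> nbhd EG u"
    using assms unfolding nbhd_def by (simp_all add: insert_commute)
  ultimately show ?thesis
    using assms(3) by (meson inj_on_def)
qed

lemma c_in_P: "{w, b} \<in> EH \<Longrightarrow> c (w, {w, b}) \<in> P"
  using palette unfolding incidences_def by auto

lemma c_in_S0: "{w, b} \<in> EH \<Longrightarrow> c (w, {w, b}) \<in> S0 EH c w"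
  unfolding S0_def by (auto simp: insert_commute)

lemma c_at_vertex:
  assumes "{w, b} \<in> EH" "{w, b'} \<in> EH" "b \<noteq> b'"
  shows "c (w, {w, b}) \<noteq> c (w, {w, b'})"
proof -
  have "inc_adj (w, {w, b}) (w, {w, b'})"
    unfolding inc_adj_def using assms(3) by (auto simp: doubleton_eq_iff)
  then show ?thesis
    using coloring_H assms(1,2) unfolding incidence_coloring_def incidences_def by auto
qed

lemma c_along_path:
  assumes "{w, b} \<in> EH" "{b, t} \<in> EH"
  shows "c (w, {w, b}) \<noteq> c (b, {b, t})"
proof -
  have "inc_adj (w, {w, b}) (b, {b, t})"
    unfolding inc_adj_def using graph_edgeD(3)[OF graph_H assms(1)] by auto
  then show ?thesis
    using coloring_H assms unfolding incidence_coloring_def incidences_def by auto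
qed

definition twist :: "'b \<Rightarrow> nat \<Rightarrow> nat" where
  "twist w k = (if x \<in> S0 EH c w then mate k else k)"

definition H_color :: "'a \<Rightarrow> 'c \<Rightarrow> nat" where
  "H_color u p = (if p = x then f u else if p = y then mate (f u) else m + \<rho> p)"

definition arc_color :: "'a \<times> 'b \<Rightarrow> 'a \<times> 'b \<Rightarrow> nat" where
  "arc_color v q = (case v of (u, w) \<Rightarrow> case q of (a, b) \<Rightarrow>
     if b = w then twist w (f a) else H_color u (c (w, {w, b})))"

lemma arc_color [simp]:
  "arc_color (u, w) (a, b) = (if b = w then twist w (f a) else H_color u (c (w, {w, b})))"
  unfolding arc_color_def by simp

lemma twist_div_2 [simp]: "twist w k div 2 = k div 2"
  unfolding twist_def by simp

lemma twist_eq_iff [simp]: "twist w j = twist w k \<longleftrightarrow> j = k"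
  unfolding twist_def by simp

lemma twist_f_less: "a \<in> VG \<Longrightarrow> twist w (f a) < m"
  unfolding twist_def using f_less mate_less[OF even_m] by simp

lemma H_color_less:
  assumes "u \<in> VG" "p \<in> P"
  shows "H_color u p < m + n"
  using f_less[OF assms(1)] mate_less[OF even_m] \<rho>_less assms(2)
  unfolding H_color_def by fastforce

lemma H_color_inj:
  assumes "u \<in> VG" "p \<in> P" "q \<in> P" "p \<noteq> q"
  shows "H_color u p \<noteq> H_color u q"
proof -
  have "f u < m" "mate (f u) < m"
    using f_less[OF assms(1)] mate_less[OF even_m] by auto
  then show ?thesis
    using assms(2-4) mate_neq[of "f u"] inj_onD[OF inj_\<rho>] unfolding H_color_def
    by (cases "p = x"; cases "q = x"; cases "p = y"; cases "q = y") auto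
qed

text \<open>A G-neighbour of u has a colour outside the matching pair of f u, which is where every
  H-colour below m lives.\<close>
lemma twist_neq_H_color:
  assumes "{u, a} \<in> EG"
  shows "twist w (f a) \<noteq> H_color u p"
proof
  assume eq: "twist w (f a) = H_color u p"
  then have "H_color u p < m"
    using twist_f_less graph_edgeD(2)[OF graph_G assms] by metis
  then have "H_color u p div 2 = f u div 2"
    unfolding H_color_def by (auto split: if_splits)
  then show False
    using eq f_edge[OF assms] twist_div_2 by metis
qed

lemma twist_neq_H_color_at_end:
  assumes "{w, t} \<in> EH" "a \<in> VG"
  shows "twist w (f a) \<noteq> H_color a (c (w, {w, t}))"
proof -
  let ?p = "c (w, {w, t})"
  have seen: "?p \<in> S0 EH c w"
    using c_in_S0[OF assms(1)] .
  consider "?p = x" | "?p = y" "?p \<noteq> x" | "?p \<noteq> x" "?p \<noteq> y" by blast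
  then show ?thesis
  proof cases
    case 1
    then show ?thesis
      using seen mate_neq unfolding twist_def H_color_def by simp
  next
    case 2
    then have "x \<notin> S0 EH c w"
      using seen x_y_apart graph_edgeD(1)[OF graph_H assms(1)] by auto
    then show ?thesis
      using 2 mate_neq unfolding twist_def H_color_def by metis
  next
    case 3
    then show ?thesis
      using twist_f_less[OF assms(2), of w] unfolding H_color_def by auto
  qed
qed

lemma cart_edge_cases [consumes 1, case_names G_edge H_edge]:
  assumes "{(u, w), (a, b)} \<in> E"
  obtains "b = w" "{u, a} \<in> EG"
    | "a = u" "b \<noteq> w" "u \<in> VG" "{w, b} \<in> EH"
  using assms graph_edgeD(3)[OF graph_H] unfolding cart_E_doubleton_iff by blast

lemma arc_color_less:
  assumes "{(u, w), (a, b)} \<in> E"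
  shows "arc_color (u, w) (a, b) < m + n"
  using assms
proof (cases rule: cart_edge_cases)
  case G_edge
  then show ?thesis
    using twist_f_less[OF graph_edgeD(2)[OF graph_G G_edge(2)], of w] by simp
next
  case H_edge
  then show ?thesis
    using H_color_less c_in_P by simp
qed

lemma arc_color_at_vertex:
  assumes "{(u, w), (a, b)} \<in> E" "{(u, w), (a', b')} \<in> E" "(a, b) \<noteq> (a', b')"
  shows "arc_color (u, w) (a, b) \<noteq> arc_color (u, w) (a', b')"
  using assms(1)
proof (cases rule: cart_edge_cases)
  case G: G_edge
  from assms(2) show ?thesis
  proof (cases rule: cart_edge_cases)
    case G_edge
    then show ?thesis
      using G assms(3) f_inj_at_vertex by auto
  next
    case H_edge
    then show ?thesis
      using G twist_neq_H_color by simp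
  qed
next
  case H: H_edge
  from assms(2) show ?thesis
  proof (cases rule: cart_edge_cases)
    case G_edge
    then show ?thesis
      using H twist_neq_H_color by (simp add: eq_commute)
  next
    case H_edge
    then show ?thesis
      using H assms(3) H_color_inj c_in_P c_at_vertex by simp
  qed
qed

lemma arc_color_along_path:
  assumes "{(u, w), (a, b)} \<in> E" "{(a, b), (s, t)} \<in> E"
  shows "arc_color (u, w) (a, b) \<noteq> arc_color (a, b) (s, t)"
  using assms(1)
proof (cases rule: cart_edge_cases)
  case G: G_edge
  from assms(2) show ?thesis
  proof (cases rule: cart_edge_cases)
    case G_edge
    then show ?thesis
      using G f_edge[of a s] by auto
  next
    case H_edge
    then show ?thesis
      using G twist_neq_H_color_at_end graph_edgeD(2)[OF graph_G G(2)] by simp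
  qed
next
  case H: H_edge
  from assms(2) show ?thesis
  proof (cases rule: cart_edge_cases)
    case G_edge
    then show ?thesis
      using H twist_neq_H_color by (simp add: eq_commute)
  next
    case H_edge
    then show ?thesis
      using H H_color_inj c_in_P c_along_path by simp
  qed
qed

theorem chi_i_cart_le: "chi_i E \<le> m + n"
proof (rule chi_i_le_of_arc_coloring)
  show "\<forall>e\<in>E. card e = 2"
    using graph_cart[OF graph_G graph_H] unfolding graph_def by blast
next
  fix v p p' assume "{v, p} \<in> E" "{v, p'} \<in> E" "p \<noteq> p'"
  then show "arc_color v p \<noteq> arc_color v p'"
    using arc_color_at_vertex by (cases v; cases p; cases p') blast
next
  fix v p q assume "{v, p} \<in> E" "{p, q} \<in> E"
  then show "arc_color v p \<noteq> arc_color p q"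
    using arc_color_along_path by (cases v; cases p; cases q) blast
next
  fix v p assume "{v, p} \<in> E"
  then show "arc_color v p < m + n"
    using arc_color_less by (cases v; cases p) blast
qed

end

lemma chi_i_cart_le_of_hom_adjustable:
  assumes "graph VG EG" "graph VH EH" "even m"
    and "graph_hom VG EG (Kminus_V m) (Kminus_E m) f" "locally_injective VG EG f"
    and "adjustable VH EH c P" "finite P"
  shows "chi_i (cart_E VG EG VH EH) \<le> m + (card P - 2)"
proof -
  obtain x y where "x \<in> P" "y \<in> P" "x \<noteq> y" "\<forall>v\<in>VH. \<not> {x, y} \<subseteq> S0 EH c v"
    using assms(6) unfolding adjustable_def by blast
  moreover have "card (P - {x, y}) = card P - 2"
    using calculation assms(7) by (simp add: card_Diff_subset)
  moreover obtain \<rho> :: "_ \<Rightarrow> nat" where "bij_betw \<rho> (P - {x, y}) {0..<card P - 2}"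
    using ex_bij_betw_finite_nat[of "P - {x, y}"] assms(7) calculation by auto
  ultimately interpret cart_coloring VG EG VH EH m f c P x y "card P - 2" \<rho>
    using assms unfolding adjustable_def bij_betw_def by unfold_locales auto
  show ?thesis by (rule chi_i_cart_le)
qed

theorem mainTheorem12:
  fixes VG :: "'a set" and EG :: "'a set set" and VH :: "'b set" and EH :: "'b set set"
  assumes "sub_2_permutable VG EG"
    and "two_adjustable VH EH"
  shows "chi_i (cart_E VG EG VH EH) \<le> maxdeg (cart_V VG VH) (cart_E VG EG VH EH) + 2"
proof -
  have gG: "graph VG EG" and gH: "graph VH EH"
    using assms unfolding sub_2_permutable_def two_adjustable_def by auto
  show ?thesis
  proof (cases "VG = {} \<or> VH = {}")
    case True
    then show ?thesis using cart_E_empty[OF gG gH] by (simp add: chi_i_empty)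
  next
    case False
    obtain f where "even (maxdeg VG EG + 2)" "locally_injective VG EG f"
      "graph_hom VG EG (Kminus_V (maxdeg VG EG + 2)) (Kminus_E (maxdeg VG EG + 2)) f"
      using assms(1) unfolding sub_2_permutable_def by blast
    moreover obtain c :: "'b \<times> 'b set \<Rightarrow> nat" and P
      where "finite P" "card P = maxdeg VH EH + 2" "adjustable VH EH c P"
      using assms(2) unfolding two_adjustable_def by blast
    ultimately have "chi_i (cart_E VG EG VH EH) \<le> maxdeg VG EG + maxdeg VH EH + 2"
      using chi_i_cart_le_of_hom_adjustable[OF gG gH] by fastforce
    then show ?thesis
      using maxdeg_cart_ge[OF gG gH] False by fastforce
  qed
qed

end
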